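(* Let $\delta_{\ell,0}>0$ and define $\delta_{\ell,i+1}=\delta_{\ell,i}/(1+\delta_{\ell,i})^2$ for $i\ge0$. Then there exists a constant $c_\ell>0$ such that for all $i\ge1$, $$\frac1{2i}-\frac{c_\ell+\log i}{8i^2}<\delta_{\ell,i}<\frac1{2i}.$$
   Context: In the paper, $\delta_{\ell,i}$ is the eigenvalue at iteration $i$ of deterministic EKI of the generalized eigenvalue problem $H\Gamma_iH^\top w_\ell=\delta_{\ell,i}\Sigma w_\ell$ along a fixed eigenvector $w_\ell$, and these satisfy the stated recurrence. *)

theory Defs
  imports "HOL-Analysis.Analysis"
begin

end

theory Submission
  imports Defs
begin

text \<open>In terms of \<open>u i = 1 / \<delta> i\<close> the recursion reads \<open>u (i + 1) = u i + 2 + 1 / u i\<close>.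
  Hence \<open>u i \<ge> u 0 + 2 i\<close>, and the excess \<open>u i - 2 i = u 0 + \<Sum>k<i. 1 / u k\<close> is positive
  and, since \<open>1 / u k \<le> 1 / (2 k)\<close>, grows at most like half a harmonic number, i.e.
  like \<open>ln i / 2\<close>. Both bounds on \<open>\<delta> i = 1 / (2 i + excess)\<close> follow.\<close>

lemma harm_le_ln_add_one: "harm n \<le> ln (real n) + (1 :: real)"
proof (cases "n = 0")
  case False
  have "harm 1 = (1 :: real)"
    by (simp add: harm_def)
  with False show ?thesis
    using euler_mascheroni_sequence_decreasing[of 1 n] by simp
qed (simp add: harm_def)

lemma inverse_div_one_plus_square:
  fixes d :: real
  assumes "d \<noteq> 0"
  shows "1 / (d / (1 + d)^2) = 1 / d + 2 + d"
  using assms by (simp add: field_simps power2_eq_square)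

lemma inverse_diff_le_div_square:
  fixes x y :: real
  assumes "0 < x" "x \<le> y"
  shows "1 / x - 1 / y \<le> (y - x) / x^2"
proof -
  have "1 / x - 1 / y = (y - x) / (x * y)"
    using assms by (simp add: field_simps)
  also have "\<dots> \<le> (y - x) / (x * x)"
    using assms by (intro divide_left_mono mult_mono) auto
  finally show ?thesis by (simp add: power2_eq_square)
qed

locale two_plus_inverse_recursion =
  fixes u :: "nat \<Rightarrow> real"
  assumes u0_pos: "0 < u 0"
    and u_Suc: "\<And>i. u (Suc i) = u i + 2 + 1 / u i"
begin

lemma linear_le: "u 0 + 2 * real i \<le> u i"
proof (induction i)
  case (Suc i)
  then have "0 < 1 / u i" using u0_pos by simp
  have "u 0 + 2 * real (Suc i) = (u 0 + 2 * real i) + 2" by simp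
  also have "\<dots> \<le> u i + 2 + 1 / u i" using Suc \<open>0 < 1 / u i\<close> by linarith
  finally show ?case by (simp add: u_Suc)
qed simp

lemma eq_sum_inverse: "u n = u 0 + 2 * real n + (\<Sum>k<n. 1 / u k)"
  by (induction n) (simp_all add: u_Suc)

lemma sum_inverse_le: "(\<Sum>k<n. 1 / u k) \<le> 1 / u 0 + harm n / 2"
proof (cases n)
  case 0
  then show ?thesis using u0_pos by (simp add: harm_def)
next
  case (Suc m)
  have "1 / u (Suc k) \<le> inverse (real (Suc k)) / 2" for k
    using linear_le[of "Suc k"] u0_pos by (simp add: field_simps)
  then have "(\<Sum>k<m. 1 / u (Suc k)) \<le> harm m / 2"
    by (simp add: harm_altdef sum_divide_distrib sum_mono)
  also have "\<dots> \<le> harm n / 2"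
    using Suc by (simp add: harm_mono)
  moreover have "(\<Sum>k<n. 1 / u k) = 1 / u 0 + (\<Sum>k<m. 1 / u (Suc k))"
    unfolding Suc by (rule sum.lessThan_Suc_shift)
  ultimately show ?thesis by simp
qed

lemma excess_le: "u n - 2 * real n \<le> u 0 + 1 / u 0 + (1 + ln (real n)) / 2"
  using eq_sum_inverse[of n] sum_inverse_le[of n] harm_le_ln_add_one[of n] by (simp add: field_simps)

lemma inverse_less: "1 \<le> i \<Longrightarrow> 1 / u i < 1 / (2 * real i)"
  using linear_le[of i] u0_pos by (simp add: frac_less2)

lemma inverse_greater:
  assumes "1 \<le> i"
  shows "1 / (2 * real i) - (2 * (u 0 + 1 / u 0 + 1) + ln (real i)) / (8 * (real i)^2) < 1 / u i"
proof -
  have "1 / (2 * real i) - 1 / u i \<le> (u i - 2 * real i) / (2 * real i)^2"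
    using assms linear_le[of i] u0_pos by (intro inverse_diff_le_div_square) auto
  also have "\<dots> = 2 * (u i - 2 * real i) / (8 * (real i)^2)"
    using assms by (simp add: power_mult_distrib field_simps)
  also have "\<dots> < (2 * (u 0 + 1 / u 0 + 1) + ln (real i)) / (8 * (real i)^2)"
  proof (rule divide_strict_right_mono)
    show "2 * (u i - 2 * real i) < 2 * (u 0 + 1 / u 0 + 1) + ln (real i)"
      using excess_le[of i] by (simp add: field_simps)
  qed (use assms in simp)
  finally show ?thesis by simp
qed

end

theorem proposition3p6:
  fixes \<delta> :: "nat \<Rightarrow> real"
  assumes pos0: "\<delta> 0 > 0"
    and rec: "\<And>i. \<delta> (Suc i) = \<delta> i / (1 + \<delta> i)^2"
  shows "\<exists>c > 0. \<forall>i \<ge> 1.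
           1 / (2 * real i) - (c + ln (real i)) / (8 * (real i)^2) < \<delta> i
           \<and> \<delta> i < 1 / (2 * real i)"
proof -
  have \<delta>_pos: "0 < \<delta> i" for i
    by (induction i) (use pos0 rec in auto)
  define u where "u i = 1 / \<delta> i" for i
  have "u (Suc i) = u i + 2 + 1 / u i" for i
    using inverse_div_one_plus_square[of "\<delta> i"] \<delta>_pos[of i] by (simp add: u_def rec)
  then interpret two_plus_inverse_recursion u
    using pos0 by unfold_locales (simp_all add: u_def)
  have "1 / u i = \<delta> i" for i
    by (simp add: u_def)
  moreover have "0 < 2 * (u 0 + 1 / u 0 + 1)"
    using u0_pos by (simp add: add_pos_pos)
  ultimately show ?thesis
    using inverse_less inverse_greater by metis
qed

end
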